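(* For every term or command $T$ and type $\sigma$: (1) For names $\alpha,\beta$ with $\beta\notin\mathrm{dom}(\Delta)$: $\Gamma\vdash T[\alpha/\beta]:\sigma\mid\Delta$ is derivable if and only if there is $\kappa$ with $\Gamma\vdash T:\sigma\mid\beta{:}\kappa,\Delta$ derivable and $\Delta(\alpha)\le_C\kappa$. (2) For a term variable $x\notin\mathrm{dom}(\Gamma)$ and a term $L$: $\Gamma\vdash T[L/x]:\sigma\mid\Delta$ is derivable if and only if there exists $\delta'$ such that $\Gamma,x{:}\delta'\vdash T:\sigma\mid\Delta$ and $\Gamma\vdash L:\delta'\mid\Delta$ are derivable.
   Context: $\lambda\mu$ terms and commands: $M::=x\mid\lambda x.M\mid MN\mid\mu\alpha.\mathsf C$ and $\mathsf C::=[\alpha]M$. $T[L/x]$ is capture-avoiding substitution, and $T[\alpha/\beta]$ renames free occurrences of the name $\beta$ to $\alpha$. Types (for a fixed $\omega$-algebraic lattice $R$): - $\Lambda_R$: $\rho::=\psi_a\mid\omega\mid\rho\wedge\rho$ ($a$ compact in $R$); - $\Lambda_D$: $\delta::=\rho\mid\kappa\to\rho\mid\omega\mid\delta\wedge\delta$; - $\Lambda_C$: $\kappa::=\delta\times\kappa\mid\omega\mid\kappa\wedge\kappa$. The relations $\le_R,\le_D,\le_C$ are the least reflexive, transitive relations with $\sigma\wedge\tau\le\sigma,\tau$, $\sigma\le\omega$, $\rho\le\sigma,\tau\Rightarrow\rho\le\sigma\wedge\tau$, and additionally: - $\psi_\bot\sim\omega$ and $\psi_{a\sqcup b}\sim\psi_a\wedge\psi_b$;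 - $\le_R\subseteq\le_D$; - $\omega\le_D\omega\to\omega$; - $\psi_a\le_D\omega\to\psi_a\le_D\psi_a$; - $\omega\le_C\omega\times\omega$; - $(\kappa\to\rho_1)\wedge(\kappa\to\rho_2)\le_D\kappa\to(\rho_1\wedge\rho_2)$; - $(\delta_1\times\kappa_1)\wedge(\delta_2\times\kappa_2)\le_C(\delta_1\wedge\delta_2)\times(\kappa_1\wedge\kappa_2)$; - $\to$ is contravariant in $\Lambda_C$ and covariant in $\Lambda_R$; - $\times$ is covariant in both arguments. Type assignment. Bases $\Gamma$ are finite maps from variables to $\Lambda_D$, and contexts $\Delta$ are finite maps from names to $\Lambda_C$. $\Gamma(x)$ and $\Delta(\alpha)$ are $\omega$ outside the domain. $\Gamma,x{:}\delta$ denotes $\Gamma\cup\{x{:}\delta\}$ (with $x\notin\mathrm{dom}\Gamma$ or $x{:}\delta\in\Gamma$), and similarly $\beta{:}\kappa,\Delta$. The rules are: - (Ax) $\Gamma,x{:}\delta\vdash x:\delta\mid\Delta$. - (Abs) From $\Gamma\vdash M:\kappa\to\rho\mid\Delta$, $\Gamma(x)=\delta$, infer $\Gamma\setminus x\vdash\lambda x.M:(\delta\times\kappa)\to\rho\mid\Delta$. - (App) From $\Gamma\vdash M:(\delta\times\kappa)\to\rho\mid\Delta$ and $\Gamma\vdash N:\delta\mid\Delta$, infer $\Gamma\vdash MN:\kappa\to\rho\mid\Delta$. - (Cmd) From $\Gamma\vdash M:\delta\mid\Delta$, $\Delta(\alpha)=\kappa$, infer $\Gamma\vdash[\alpha]M:\delta\times\kappa\mid\Delta$.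 - ($\mu$) From $\Gamma\vdash\mathsf C:(\kappa'\to\rho)\times\kappa'\mid\Delta$, $\Delta(\alpha)=\kappa$, infer $\Gamma\vdash\mu\alpha.\mathsf C:\kappa\to\rho\mid\Delta\setminus\alpha$. - ($\wedge$), ($\omega$) and ($\le$). Variables in $\Gamma$ and names in $\Delta$ are assumed not bound in the subject. *)

theory Defs
  imports Main "HOL-Library.Countable_Set"
begin

definition directed_set :: "'a::order set \<Rightarrow> bool" where
  "directed_set D \<longleftrightarrow> D \<noteq> {} \<and> (\<forall>x\<in>D. \<forall>y\<in>D. \<exists>z\<in>D. x \<le> z \<and> y \<le> z)"

definition compact_elem :: "'a::complete_lattice \<Rightarrow> bool" where
  "compact_elem a \<longleftrightarrow> (\<forall>D. directed_set D \<and> a \<le> Sup D \<longrightarrow> (\<exists>d\<in>D. a \<le> d))"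

definition omega_algebraic :: "'a::complete_lattice itself \<Rightarrow> bool" where
  "omega_algebraic _ \<longleftrightarrow>
     countable {a::'a. compact_elem a} \<and> (\<forall>x::'a. x = Sup {a. compact_elem a \<and> a \<le> x})"

text \<open>The compact elements of R (indices of the atomic types psi_a).\<close>
typedef (overloaded) ('a::complete_lattice) cpt = "{a::'a. compact_elem a}"
  by (rule exI[of _ bot]) (auto simp: compact_elem_def directed_set_def)

datatype 'c rty = Psi 'c | OmR | AndR "'c rty" "'c rty"

datatype 'c dty =
    DPsi 'c | Arr "'c cty" "'c rty" | OmD | AndD "'c dty" "'c dty"
and 'c cty = Prod "'c dty" "'c cty" | OmC | AndC "'c cty" "'c cty"

primrec emb :: "'c rty \<Rightarrow> 'c dty" where
  "emb (Psi a) = DPsi a"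
| "emb OmR = OmD"
| "emb (AndR a b) = AndD (emb a) (emb b)"

inductive le_R :: "'r::complete_lattice cpt rty \<Rightarrow> 'r cpt rty \<Rightarrow> bool" where
  R_refl: "le_R a a"
| R_trans: "le_R a b \<Longrightarrow> le_R b c \<Longrightarrow> le_R a c"
| R_andL: "le_R (AndR a b) a"
| R_andR: "le_R (AndR a b) b"
| R_om: "le_R a OmR"
| R_glb: "le_R a b \<Longrightarrow> le_R a c \<Longrightarrow> le_R a (AndR b c)"
| R_bot1: "Rep_cpt c = bot \<Longrightarrow> le_R (Psi c) OmR"
| R_bot2: "Rep_cpt c = bot \<Longrightarrow> le_R OmR (Psi c)"
| R_join1: "Rep_cpt c = sup (Rep_cpt a) (Rep_cpt b) \<Longrightarrow> le_R (Psi c) (AndR (Psi a) (Psi b))"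
| R_join2: "Rep_cpt c = sup (Rep_cpt a) (Rep_cpt b) \<Longrightarrow> le_R (AndR (Psi a) (Psi b)) (Psi c)"

inductive le_D :: "'r::complete_lattice cpt dty \<Rightarrow> 'r cpt dty \<Rightarrow> bool"
  and le_C :: "'r::complete_lattice cpt cty \<Rightarrow> 'r cpt cty \<Rightarrow> bool" where
  D_refl: "le_D a a"
| D_trans: "le_D a b \<Longrightarrow> le_D b c \<Longrightarrow> le_D a c"
| D_andL: "le_D (AndD a b) a"
| D_andR: "le_D (AndD a b) b"
| D_om: "le_D a OmD"
| D_glb: "le_D a b \<Longrightarrow> le_D a c \<Longrightarrow> le_D a (AndD b c)"
| D_R: "le_R r r' \<Longrightarrow> le_D (emb r) (emb r')"
| D_om_arr: "le_D OmD (Arr OmC OmR)"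
| D_psi1: "le_D (DPsi a) (Arr OmC (Psi a))"
| D_psi2: "le_D (Arr OmC (Psi a)) (DPsi a)"
| D_arr_and: "le_D (AndD (Arr k r1) (Arr k r2)) (Arr k (AndR r1 r2))"
| D_arr_mono: "le_C k' k \<Longrightarrow> le_R r r' \<Longrightarrow> le_D (Arr k r) (Arr k' r')"
| C_refl: "le_C a a"
| C_trans: "le_C a b \<Longrightarrow> le_C b c \<Longrightarrow> le_C a c"
| C_andL: "le_C (AndC a b) a"
| C_andR: "le_C (AndC a b) b"
| C_om: "le_C a OmC"
| C_glb: "le_C a b \<Longrightarrow> le_C a c \<Longrightarrow> le_C a (AndC b c)"
| C_om_prod: "le_C OmC (Prod OmD OmC)"
| C_prod_and: "le_C (AndC (Prod d1 k1) (Prod d2 k2)) (Prod (AndD d1 d2) (AndC k1 k2))"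
| C_prod_mono: "le_D d d' \<Longrightarrow> le_C k k' \<Longrightarrow> le_C (Prod d k) (Prod d' k')"

type_synonym var = nat
type_synonym name = nat

datatype trm = Var var | Lam var trm | App trm trm | Mu name cmd
and cmd = Cmd name trm

primrec fv_t :: "trm \<Rightarrow> var set" and fv_c :: "cmd \<Rightarrow> var set" where
  "fv_t (Var x) = {x}"
| "fv_t (Lam x M) = fv_t M - {x}"
| "fv_t (App M N) = fv_t M \<union> fv_t N"
| "fv_t (Mu a C) = fv_c C"
| "fv_c (Cmd a M) = fv_t M"

primrec bv_t :: "trm \<Rightarrow> var set" and bv_c :: "cmd \<Rightarrow> var set" where
  "bv_t (Var x) = {}"
| "bv_t (Lam x M) = insert x (bv_t M)"
| "bv_t (App M N) = bv_t M \<union> bv_t N"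
| "bv_t (Mu a C) = bv_c C"
| "bv_c (Cmd a M) = bv_t M"

primrec fn_t :: "trm \<Rightarrow> name set" and fn_c :: "cmd \<Rightarrow> name set" where
  "fn_t (Var x) = {}"
| "fn_t (Lam x M) = fn_t M"
| "fn_t (App M N) = fn_t M \<union> fn_t N"
| "fn_t (Mu a C) = fn_c C - {a}"
| "fn_c (Cmd a M) = insert a (fn_t M)"

primrec bn_t :: "trm \<Rightarrow> name set" and bn_c :: "cmd \<Rightarrow> name set" where
  "bn_t (Var x) = {}"
| "bn_t (Lam x M) = bn_t M"
| "bn_t (App M N) = bn_t M \<union> bn_t N"
| "bn_t (Mu a C) = insert a (bn_c C)"
| "bn_c (Cmd a M) = bn_t M"

text \<open>Substitution T[L/x]. It is capture-avoiding under the freshness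
  hypotheses (bound variables/names of T disjoint from the free ones of L)
  that the theorem assumes.\<close>
primrec subst_t :: "trm \<Rightarrow> trm \<Rightarrow> var \<Rightarrow> trm" and subst_c :: "cmd \<Rightarrow> trm \<Rightarrow> var \<Rightarrow> cmd" where
  "subst_t (Var y) L x = (if y = x then L else Var y)"
| "subst_t (Lam y M) L x = (if y = x then Lam y M else Lam y (subst_t M L x))"
| "subst_t (App M N) L x = App (subst_t M L x) (subst_t N L x)"
| "subst_t (Mu a C) L x = Mu a (subst_c C L x)"
| "subst_c (Cmd a M) L x = Cmd a (subst_t M L x)"

primrec ren_t :: "trm \<Rightarrow> name \<Rightarrow> name \<Rightarrow> trm" and ren_c :: "cmd \<Rightarrow> name \<Rightarrow> name \<Rightarrow> cmd" where
  "ren_t (Var y) a b = Var y"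
| "ren_t (Lam y M) a b = Lam y (ren_t M a b)"
| "ren_t (App M N) a b = App (ren_t M a b) (ren_t N a b)"
| "ren_t (Mu g C) a b = (if g = b then Mu g C else Mu g (ren_c C a b))"
| "ren_c (Cmd g M) a b = Cmd (if g = b then a else g) (ren_t M a b)"

type_synonym 'r basis = "var \<rightharpoonup> 'r cpt dty"
type_synonym 'r ctxt = "name \<rightharpoonup> 'r cpt cty"

definition gam :: "('r::complete_lattice) basis \<Rightarrow> var \<Rightarrow> 'r cpt dty" where
  "gam \<Gamma> x = (case \<Gamma> x of None \<Rightarrow> OmD | Some d \<Rightarrow> d)"

definition dlt :: "('r::complete_lattice) ctxt \<Rightarrow> name \<Rightarrow> 'r cpt cty" where
  "dlt \<Delta> a = (case \<Delta> a of None \<Rightarrow> OmC | Some k \<Rightarrow> k)"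

inductive typ_t :: "('r::complete_lattice) basis \<Rightarrow> trm \<Rightarrow> 'r cpt dty \<Rightarrow> 'r ctxt \<Rightarrow> bool"
  and typ_c :: "('r::complete_lattice) basis \<Rightarrow> cmd \<Rightarrow> 'r cpt cty \<Rightarrow> 'r ctxt \<Rightarrow> bool" where
  Ax: "\<Gamma> x = Some d \<Longrightarrow> typ_t \<Gamma> (Var x) d \<Delta>"
| Abs: "typ_t \<Gamma> M (Arr k r) \<Delta> \<Longrightarrow> typ_t (\<Gamma>(x := None)) (Lam x M) (Arr (Prod (gam \<Gamma> x) k) r) \<Delta>"
| App: "typ_t \<Gamma> M (Arr (Prod d k) r) \<Delta> \<Longrightarrow> typ_t \<Gamma> N d \<Delta> \<Longrightarrow> typ_t \<Gamma> (App M N) (Arr k r) \<Delta>"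
| Cmd: "typ_t \<Gamma> M d \<Delta> \<Longrightarrow> typ_c \<Gamma> (Cmd a M) (Prod d (dlt \<Delta> a)) \<Delta>"
| Mu: "typ_c \<Gamma> C (Prod (Arr k' r) k') \<Delta> \<Longrightarrow> typ_t \<Gamma> (Mu a C) (Arr (dlt \<Delta> a) r) (\<Delta>(a := None))"
| And_t: "typ_t \<Gamma> M d1 \<Delta> \<Longrightarrow> typ_t \<Gamma> M d2 \<Delta> \<Longrightarrow> typ_t \<Gamma> M (AndD d1 d2) \<Delta>"
| Om_t: "typ_t \<Gamma> M OmD \<Delta>"
| Le_t: "typ_t \<Gamma> M d \<Delta> \<Longrightarrow> le_D d d' \<Longrightarrow> typ_t \<Gamma> M d' \<Delta>"
| And_c: "typ_c \<Gamma> C k1 \<Delta> \<Longrightarrow> typ_c \<Gamma> C k2 \<Delta> \<Longrightarrow> typ_c \<Gamma> C (AndC k1 k2) \<Delta>"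
| Om_c: "typ_c \<Gamma> C OmC \<Delta>"
| Le_c: "typ_c \<Gamma> C k \<Delta> \<Longrightarrow> le_C k k' \<Longrightarrow> typ_c \<Gamma> C k' \<Delta>"

end

theory Submission
  imports Defs
begin

text \<open>Renaming \<beta> to \<alpha> only redirects the commands
  [\<beta>]M to \<alpha>, so a derivation for T[\<alpha>/\<beta>] is one for T with \<beta> typed as \<Delta>(\<alpha>); conversely a
  type \<kappa> for \<beta> above \<Delta>(\<alpha>) is absorbed by subsumption at these commands.
  For substitution, the direction from T to T[L/x] is the usual substitution lemma. In the
  other direction each occurrence of L in T[L/x] is typed on its own, and the intersection
  of the types received by L at the different occurrences is the type \<delta>' given to x.\<close>

lemma typ_env_cong:
  "typ_t \<Gamma> M \<sigma> \<Delta> \<Longrightarrow> (\<And>\<Gamma>' \<Delta>'. \<forall>z\<in>fv_t M. \<Gamma>' z = \<Gamma> z \<Longrightarrow> bv_t M \<inter> dom \<Gamma>' \<subseteq> dom \<Gamma> \<Longrightarrow>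
     \<forall>n\<in>fn_t M. \<Delta>' n = \<Delta> n \<Longrightarrow> bn_t M \<inter> dom \<Delta>' \<subseteq> dom \<Delta> \<Longrightarrow> typ_t \<Gamma>' M \<sigma> \<Delta>')"
  "typ_c \<Gamma> C \<kappa> \<Delta> \<Longrightarrow> (\<And>\<Gamma>' \<Delta>'. \<forall>z\<in>fv_c C. \<Gamma>' z = \<Gamma> z \<Longrightarrow> bv_c C \<inter> dom \<Gamma>' \<subseteq> dom \<Gamma> \<Longrightarrow>
     \<forall>n\<in>fn_c C. \<Delta>' n = \<Delta> n \<Longrightarrow> bn_c C \<inter> dom \<Delta>' \<subseteq> dom \<Delta> \<Longrightarrow> typ_c \<Gamma>' C \<kappa> \<Delta>')"
proof (induction rule: typ_t_typ_c.inducts)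
  case (Abs \<Gamma> M k r \<Delta> x)
  have "\<Gamma>' x = None" using Abs.prems(2) by (auto simp: subset_iff)
  have "typ_t (\<Gamma>'(x := \<Gamma> x)) M (Arr k r) \<Delta>'"
    using Abs.prems by (intro Abs.IH) (auto simp: subset_iff dom_def split: if_splits)
  from typ_t_typ_c.Abs[OF this, of x] show ?case
    using \<open>\<Gamma>' x = None\<close> by (simp add: gam_def fun_upd_idem)
next
  case (App \<Gamma> M d k r \<Delta> N)
  have "typ_t \<Gamma>' M (Arr (Prod d k) r) \<Delta>'" "typ_t \<Gamma>' N d \<Delta>'"
    using App.prems by (intro App.IH; auto)+
  then show ?case by (rule typ_t_typ_c.App)
next
  case (Cmd \<Gamma> M d \<Delta> a)
  then have "typ_c \<Gamma>' (Cmd a M) (Prod d (dlt \<Delta>' a)) \<Delta>'"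
    by (auto intro: typ_t_typ_c.Cmd)
  with Cmd.prems(3) show ?case by (simp add: dlt_def)
next
  case (Mu \<Gamma> C k' r \<Delta> a)
  have "\<Delta>' a = None" using Mu.prems(4) by (auto simp: subset_iff)
  have "typ_c \<Gamma>' C (Prod (Arr k' r) k') (\<Delta>'(a := \<Delta> a))"
    using Mu.prems by (intro Mu.IH) (auto simp: subset_iff dom_def split: if_splits)
  from typ_t_typ_c.Mu[OF this, of a] show ?case
    using \<open>\<Delta>' a = None\<close> by (simp add: dlt_def fun_upd_idem)
qed (auto intro: typ_t_typ_c.intros)

lemma typ_basis_antimono:
  "typ_t \<Gamma> M \<sigma> \<Delta> \<Longrightarrow> (\<And>\<Gamma>'. \<forall>z. le_D (gam \<Gamma>' z) (gam \<Gamma> z) \<Longrightarrow> dom \<Gamma>' \<subseteq> dom \<Gamma> \<Longrightarrow> typ_t \<Gamma>' M \<sigma> \<Delta>)"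
  "typ_c \<Gamma> C \<kappa> \<Delta> \<Longrightarrow> (\<And>\<Gamma>'. \<forall>z. le_D (gam \<Gamma>' z) (gam \<Gamma> z) \<Longrightarrow> dom \<Gamma>' \<subseteq> dom \<Gamma> \<Longrightarrow> typ_c \<Gamma>' C \<kappa> \<Delta>)"
proof (induction rule: typ_t_typ_c.inducts)
  case (Ax \<Gamma> x d \<Delta>)
  then have "le_D (gam \<Gamma>' x) d" by (metis gam_def option.simps(5))
  moreover have "typ_t \<Gamma>' (Var x) (gam \<Gamma>' x) \<Delta>"
    by (cases "\<Gamma>' x") (auto simp: gam_def intro: typ_t_typ_c.Ax typ_t_typ_c.Om_t)
  ultimately show ?case by (rule typ_t_typ_c.Le_t[rotated])
next
  case (Abs \<Gamma> M k r \<Delta> x)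
  have "\<Gamma>' x = None" using Abs.prems(2) by (auto simp: subset_iff)
  have "typ_t (\<Gamma>'(x := \<Gamma> x)) M (Arr k r) \<Delta>"
  proof (rule Abs.IH)
    show "\<forall>z. le_D (gam (\<Gamma>'(x := \<Gamma> x)) z) (gam \<Gamma> z)"
    proof
      fix z show "le_D (gam (\<Gamma>'(x := \<Gamma> x)) z) (gam \<Gamma> z)"
        using spec[OF Abs.prems(1), of z] by (cases "z = x") (simp_all add: gam_def le_D_le_C.D_refl)
    qed
  qed (use Abs.prems(2) in \<open>auto simp: subset_iff dom_def split: if_splits\<close>)
  from typ_t_typ_c.Abs[OF this, of x] show ?case
    using \<open>\<Gamma>' x = None\<close> by (simp add: gam_def fun_upd_idem)
qed (meson typ_t_typ_c.intros)+

lemma typ_basis_upd_le: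
  "typ_t (\<Gamma>(x \<mapsto> \<delta>)) M \<sigma> \<Delta> \<Longrightarrow> le_D \<delta>' \<delta> \<Longrightarrow> typ_t (\<Gamma>(x \<mapsto> \<delta>')) M \<sigma> \<Delta>"
  "typ_c (\<Gamma>(x \<mapsto> \<delta>)) C \<kappa> \<Delta> \<Longrightarrow> le_D \<delta>' \<delta> \<Longrightarrow> typ_c (\<Gamma>(x \<mapsto> \<delta>')) C \<kappa> \<Delta>"
  by (erule typ_basis_antimono; auto simp: gam_def le_D_le_C.D_refl)+

lemma ren_t_eq_VarD: "Var x = ren_t M a b \<Longrightarrow> M = Var x"
  and ren_t_eq_LamD: "Lam x N = ren_t M a b \<Longrightarrow> \<exists>M'. M = Lam x M' \<and> N = ren_t M' a b"
  and ren_t_eq_AppD: "App N1 N2 = ren_t M a b \<Longrightarrow>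
    \<exists>M1 M2. M = App M1 M2 \<and> N1 = ren_t M1 a b \<and> N2 = ren_t M2 a b"
  and ren_t_eq_MuD: "Mu g C' = ren_t M a b \<Longrightarrow> b \<notin> bn_t M \<Longrightarrow> \<exists>C. M = Mu g C \<and> C' = ren_c C a b"
  and ren_c_eq_CmdD: "Cmd g N = ren_c C a b \<Longrightarrow>
    \<exists>g0 M. C = Cmd g0 M \<and> g = (if g0 = b then a else g0) \<and> N = ren_t M a b"
  by (cases M; auto split: if_splits; fail)+ (cases C; auto)

lemma typ_renD:
  "typ_t \<Gamma> N \<sigma> \<Delta> \<Longrightarrow> (\<And>M. N = ren_t M a b \<Longrightarrow> a \<notin> bn_t M \<Longrightarrow> b \<notin> bn_t M \<Longrightarrow>
     typ_t \<Gamma> M \<sigma> (\<Delta>(b \<mapsto> dlt \<Delta> a)))"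
  "typ_c \<Gamma> C' \<kappa> \<Delta> \<Longrightarrow> (\<And>C. C' = ren_c C a b \<Longrightarrow> a \<notin> bn_c C \<Longrightarrow> b \<notin> bn_c C \<Longrightarrow>
     typ_c \<Gamma> C \<kappa> (\<Delta>(b \<mapsto> dlt \<Delta> a)))"
proof (induction rule: typ_t_typ_c.inducts)
  case (Ax \<Gamma> x d \<Delta>)
  then show ?case by (metis ren_t_eq_VarD typ_t_typ_c.Ax)
next
  case (Abs \<Gamma> M k r \<Delta> x M0)
  then obtain M' where "M0 = Lam x M'" "M = ren_t M' a b" by (metis ren_t_eq_LamD)
  with Abs.prems have "typ_t \<Gamma> M' (Arr k r) (\<Delta>(b \<mapsto> dlt \<Delta> a))" by (intro Abs.IH) auto
  from typ_t_typ_c.Abs[OF this, of x] show ?case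
    unfolding \<open>M0 = Lam x M'\<close> .
next
  case (App \<Gamma> M d k r \<Delta> N M0)
  then obtain M1 M2 where "M0 = App M1 M2" "M = ren_t M1 a b" "N = ren_t M2 a b"
    by (metis ren_t_eq_AppD)
  with App.prems App.IH show ?case by (auto intro: typ_t_typ_c.App)
next
  case (Cmd \<Gamma> M d \<Delta> g C)
  then obtain g0 M0 where C: "C = Cmd g0 M0" "g = (if g0 = b then a else g0)" "M = ren_t M0 a b"
    by (metis ren_c_eq_CmdD)
  with Cmd.prems have "typ_t \<Gamma> M0 d (\<Delta>(b \<mapsto> dlt \<Delta> a))" by (intro Cmd.IH) auto
  from typ_t_typ_c.Cmd[OF this, of g0] show ?case
    using C by (auto simp: dlt_def fun_upd_def)
next
  case (Mu \<Gamma> C k' r \<Delta> g M0)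
  then obtain C0 where M0: "M0 = Mu g C0" "C = ren_c C0 a b" by (metis ren_t_eq_MuD)
  with Mu.prems have "g \<noteq> a" "g \<noteq> b" by auto
  from M0 Mu.prems have "typ_c \<Gamma> C0 (Prod (Arr k' r) k') (\<Delta>(b \<mapsto> dlt \<Delta> a))"
    by (intro Mu.IH) auto
  moreover have "(\<Delta>(b \<mapsto> dlt \<Delta> a))(g := None) = (\<Delta>(g := None))(b \<mapsto> dlt (\<Delta>(g := None)) a)"
    using \<open>g \<noteq> a\<close> \<open>g \<noteq> b\<close> by (simp add: dlt_def fun_upd_twist)
  moreover have "dlt (\<Delta>(b \<mapsto> dlt \<Delta> a)) g = dlt \<Delta> g"
    using \<open>g \<noteq> b\<close> by (simp add: dlt_def)
  ultimately show ?case
    using typ_t_typ_c.Mu[of \<Gamma> C0 k' r "\<Delta>(b \<mapsto> dlt \<Delta> a)" g] M0(1) by metis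
qed (blast intro: typ_t_typ_c.intros)+

lemma typ_renI:
  "typ_t \<Gamma> M \<sigma> \<Delta> \<Longrightarrow> a \<notin> bn_t M \<Longrightarrow> b \<notin> bn_t M \<Longrightarrow> le_C (dlt (\<Delta>(b := None)) a) (dlt \<Delta> b) \<Longrightarrow>
     typ_t \<Gamma> (ren_t M a b) \<sigma> (\<Delta>(b := None))"
  "typ_c \<Gamma> C \<kappa> \<Delta> \<Longrightarrow> a \<notin> bn_c C \<Longrightarrow> b \<notin> bn_c C \<Longrightarrow> le_C (dlt (\<Delta>(b := None)) a) (dlt \<Delta> b) \<Longrightarrow>
     typ_c \<Gamma> (ren_c C a b) \<kappa> (\<Delta>(b := None))"
proof (induction rule: typ_t_typ_c.inducts)
  case (Cmd \<Gamma> M d \<Delta> g)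
  have M: "typ_t \<Gamma> (ren_t M a b) d (\<Delta>(b := None))"
    using Cmd.prems by (intro Cmd.IH) auto
  show ?case
  proof (cases "g = b")
    case True
    have "le_C (Prod d (dlt (\<Delta>(b := None)) a)) (Prod d (dlt \<Delta> b))"
      using Cmd.prems(3) by (intro le_D_le_C.C_prod_mono le_D_le_C.D_refl)
    from typ_t_typ_c.Le_c[OF typ_t_typ_c.Cmd[OF M, of a] this] show ?thesis
      using True by (simp add: fun_upd_def)
  next
    case False
    with typ_t_typ_c.Cmd[OF M, of g] show ?thesis by (simp add: dlt_def fun_upd_def)
  qed
next
  case (Mu \<Gamma> C k' r \<Delta> g)
  then have "g \<noteq> a" "g \<noteq> b" by auto
  with Mu.prems have "typ_c \<Gamma> (ren_c C a b) (Prod (Arr k' r) k') (\<Delta>(b := None))"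
    by (intro Mu.IH) (auto simp: dlt_def)
  moreover have "(\<Delta>(b := None))(g := None) = (\<Delta>(g := None))(b := None)"
    using \<open>g \<noteq> b\<close> by (metis fun_upd_twist)
  moreover have "dlt (\<Delta>(b := None)) g = dlt \<Delta> g"
    using \<open>g \<noteq> b\<close> by (simp add: dlt_def)
  ultimately show ?case
    using typ_t_typ_c.Mu[of \<Gamma> "ren_c C a b" k' r "\<Delta>(b := None)" g] \<open>g \<noteq> b\<close> by (metis ren_t.simps(4))
qed (auto intro: typ_t_typ_c.intros)

lemma dlt_fun_upd_same [simp]: "dlt (\<Delta>(a \<mapsto> \<kappa>)) a = \<kappa>"
  by (simp add: dlt_def)

lemma typ_t_ren_iff:
  assumes "b \<notin> dom \<Delta>" "a \<notin> bn_t M" "b \<notin> bn_t M"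
  shows "typ_t \<Gamma> (ren_t M a b) \<sigma> \<Delta> \<longleftrightarrow> (\<exists>\<kappa>. typ_t \<Gamma> M \<sigma> (\<Delta>(b \<mapsto> \<kappa>)) \<and> le_C (dlt \<Delta> a) \<kappa>)"
proof
  assume "typ_t \<Gamma> (ren_t M a b) \<sigma> \<Delta>"
  with assms show "\<exists>\<kappa>. typ_t \<Gamma> M \<sigma> (\<Delta>(b \<mapsto> \<kappa>)) \<and> le_C (dlt \<Delta> a) \<kappa>"
    by (blast intro: typ_renD(1) le_D_le_C.C_refl)
next
  assume "\<exists>\<kappa>. typ_t \<Gamma> M \<sigma> (\<Delta>(b \<mapsto> \<kappa>)) \<and> le_C (dlt \<Delta> a) \<kappa>"
  then obtain \<kappa> where "typ_t \<Gamma> M \<sigma> (\<Delta>(b \<mapsto> \<kappa>))" "le_C (dlt \<Delta> a) \<kappa>" by blast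
  from typ_renI(1)[OF this(1) assms(2,3)] this(2) show "typ_t \<Gamma> (ren_t M a b) \<sigma> \<Delta>"
    using assms by simp
qed

lemma typ_c_ren_iff:
  assumes "b \<notin> dom \<Delta>" "a \<notin> bn_c C" "b \<notin> bn_c C"
  shows "typ_c \<Gamma> (ren_c C a b) \<tau> \<Delta> \<longleftrightarrow> (\<exists>\<kappa>. typ_c \<Gamma> C \<tau> (\<Delta>(b \<mapsto> \<kappa>)) \<and> le_C (dlt \<Delta> a) \<kappa>)"
proof
  assume "typ_c \<Gamma> (ren_c C a b) \<tau> \<Delta>"
  with assms show "\<exists>\<kappa>. typ_c \<Gamma> C \<tau> (\<Delta>(b \<mapsto> \<kappa>)) \<and> le_C (dlt \<Delta> a) \<kappa>"
    by (blast intro: typ_renD(2) le_D_le_C.C_refl)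
next
  assume "\<exists>\<kappa>. typ_c \<Gamma> C \<tau> (\<Delta>(b \<mapsto> \<kappa>)) \<and> le_C (dlt \<Delta> a) \<kappa>"
  then obtain \<kappa> where "typ_c \<Gamma> C \<tau> (\<Delta>(b \<mapsto> \<kappa>))" "le_C (dlt \<Delta> a) \<kappa>" by blast
  from typ_renI(2)[OF this(1) assms(2,3)] this(2) show "typ_c \<Gamma> (ren_c C a b) \<tau> \<Delta>"
    using assms by simp
qed

lemma subst_t_eq_VarD: "Var y = subst_t M L x \<Longrightarrow> M \<noteq> Var x \<Longrightarrow> M = Var y \<and> y \<noteq> x"
  and subst_t_eq_LamD: "Lam y N = subst_t M L x \<Longrightarrow> M \<noteq> Var x \<Longrightarrow> x \<notin> bv_t M \<Longrightarrow>
    \<exists>M'. M = Lam y M' \<and> N = subst_t M' L x \<and> y \<noteq> x"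
  and subst_t_eq_AppD: "App N1 N2 = subst_t M L x \<Longrightarrow> M \<noteq> Var x \<Longrightarrow>
    \<exists>M1 M2. M = App M1 M2 \<and> N1 = subst_t M1 L x \<and> N2 = subst_t M2 L x"
  and subst_t_eq_MuD: "Mu g C' = subst_t M L x \<Longrightarrow> M \<noteq> Var x \<Longrightarrow> \<exists>C. M = Mu g C \<and> C' = subst_c C L x"
  and subst_c_eq_CmdD: "Cmd g N = subst_c C L x \<Longrightarrow> \<exists>M. C = Cmd g M \<and> N = subst_t M L x"
  by (cases M; auto split: if_splits; fail)+ (cases C; auto)

lemma typ_substI:
  "typ_t \<Gamma> M \<sigma> \<Delta> \<Longrightarrow> \<Gamma> x = Some \<delta> \<Longrightarrow> typ_t (\<Gamma>(x := None)) L \<delta> \<Delta> \<Longrightarrow>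
     bv_t M \<inter> (fv_t L \<union> bv_t L) = {} \<Longrightarrow> bn_t M \<inter> (fn_t L \<union> bn_t L) = {} \<Longrightarrow>
     typ_t (\<Gamma>(x := None)) (subst_t M L x) \<sigma> \<Delta>"
  "typ_c \<Gamma> C \<kappa> \<Delta> \<Longrightarrow> \<Gamma> x = Some \<delta> \<Longrightarrow> typ_t (\<Gamma>(x := None)) L \<delta> \<Delta> \<Longrightarrow>
     bv_c C \<inter> (fv_t L \<union> bv_t L) = {} \<Longrightarrow> bn_c C \<inter> (fn_t L \<union> bn_t L) = {} \<Longrightarrow>
     typ_c (\<Gamma>(x := None)) (subst_c C L x) \<kappa> \<Delta>"
proof (induction rule: typ_t_typ_c.inducts)
  case (Ax \<Gamma> y d \<Delta>)
  then show ?case by (auto intro: typ_t_typ_c.Ax)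
next
  case (Abs \<Gamma> M k r \<Delta> y)
  then have "y \<noteq> x" "\<Gamma> x = Some \<delta>" by (auto split: if_splits)
  have "typ_t (\<Gamma>(x := None)) L \<delta> \<Delta>"
    using Abs.prems(3) by (intro typ_env_cong(1)[OF Abs.prems(2)]) (auto simp: subset_iff)
  with Abs.prems have "typ_t (\<Gamma>(x := None)) (subst_t M L x) (Arr k r) \<Delta>"
    by (intro Abs.IH \<open>\<Gamma> x = Some \<delta>\<close>) (auto simp: fun_upd_def)
  moreover have "(\<Gamma>(x := None))(y := None) = (\<Gamma>(y := None))(x := None)"
    using \<open>y \<noteq> x\<close> by (metis fun_upd_twist)
  moreover have "gam (\<Gamma>(x := None)) y = gam \<Gamma> y"
    using \<open>y \<noteq> x\<close> by (simp add: gam_def)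
  ultimately show ?case
    using typ_t_typ_c.Abs[of "\<Gamma>(x := None)" "subst_t M L x" k r \<Delta> y] \<open>y \<noteq> x\<close>
    by (metis subst_t.simps(2))
next
  case (Mu \<Gamma> C k' r \<Delta> g)
  have "typ_t (\<Gamma>(x := None)) L \<delta> \<Delta>"
    using Mu.prems(4) by (intro typ_env_cong(1)[OF Mu.prems(2)]) (auto simp: subset_iff)
  with Mu.prems have "typ_c (\<Gamma>(x := None)) (subst_c C L x) (Prod (Arr k' r) k') \<Delta>"
    by (intro Mu.IH) (auto simp: fun_upd_def)
  from typ_t_typ_c.Mu[OF this, of g] show ?case by (simp add: fun_upd_def)
qed (auto intro: typ_t_typ_c.intros)

lemma typ_basis_upd_AndD:
  "typ_t (\<Gamma>(x \<mapsto> \<delta>1)) M \<sigma> \<Delta> \<Longrightarrow> typ_t (\<Gamma>(x \<mapsto> AndD \<delta>1 \<delta>2)) M \<sigma> \<Delta>"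
  "typ_t (\<Gamma>(x \<mapsto> \<delta>2)) M \<sigma> \<Delta> \<Longrightarrow> typ_t (\<Gamma>(x \<mapsto> AndD \<delta>1 \<delta>2)) M \<sigma> \<Delta>"
  "typ_c (\<Gamma>(x \<mapsto> \<delta>1)) C \<kappa> \<Delta> \<Longrightarrow> typ_c (\<Gamma>(x \<mapsto> AndD \<delta>1 \<delta>2)) C \<kappa> \<Delta>"
  "typ_c (\<Gamma>(x \<mapsto> \<delta>2)) C \<kappa> \<Delta> \<Longrightarrow> typ_c (\<Gamma>(x \<mapsto> AndD \<delta>1 \<delta>2)) C \<kappa> \<Delta>"
  by (erule typ_basis_upd_le; rule le_D_le_C.D_andL le_D_le_C.D_andR)+

lemma typ_substD_nonVar:
  assumes "typ_t \<Gamma> (subst_t M L x) \<sigma> \<Delta>"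
    and "M \<noteq> Var x \<Longrightarrow> \<exists>\<delta>. typ_t (\<Gamma>(x \<mapsto> \<delta>)) M \<sigma> \<Delta> \<and> typ_t \<Gamma> L \<delta> \<Delta>"
  shows "\<exists>\<delta>. typ_t (\<Gamma>(x \<mapsto> \<delta>)) M \<sigma> \<Delta> \<and> typ_t \<Gamma> L \<delta> \<Delta>"
proof (cases "M = Var x")
  case True
  have "typ_t (\<Gamma>(x \<mapsto> \<sigma>)) (Var x) \<sigma> \<Delta>" by (simp add: typ_t_typ_c.Ax)
  with True assms(1) show ?thesis by auto
qed (rule assms(2))

lemma typ_substD:
  "typ_t \<Gamma> N \<sigma> \<Delta> \<Longrightarrow> (\<And>M. N = subst_t M L x \<Longrightarrow> x \<notin> bv_t M \<Longrightarrow>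
     bv_t M \<inter> fv_t L = {} \<Longrightarrow> bn_t M \<inter> fn_t L = {} \<Longrightarrow>
     \<exists>\<delta>. typ_t (\<Gamma>(x \<mapsto> \<delta>)) M \<sigma> \<Delta> \<and> typ_t \<Gamma> L \<delta> \<Delta>)"
  "typ_c \<Gamma> C' \<kappa> \<Delta> \<Longrightarrow> (\<And>C. C' = subst_c C L x \<Longrightarrow> x \<notin> bv_c C \<Longrightarrow>
     bv_c C \<inter> fv_t L = {} \<Longrightarrow> bn_c C \<inter> fn_t L = {} \<Longrightarrow>
     \<exists>\<delta>. typ_c (\<Gamma>(x \<mapsto> \<delta>)) C \<kappa> \<Delta> \<and> typ_t \<Gamma> L \<delta> \<Delta>)"
proof (induction rule: typ_t_typ_c.inducts)
  case (Ax \<Gamma> y d \<Delta> M)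
  from Ax.hyps have "typ_t \<Gamma> (subst_t M L x) d \<Delta>"
    unfolding Ax.prems(1)[symmetric] by (rule typ_t_typ_c.Ax)
  then show ?case
  proof (rule typ_substD_nonVar)
    assume "M \<noteq> Var x"
    with Ax.prems(1) have "M = Var y" "y \<noteq> x" by (auto dest: subst_t_eq_VarD)
    with Ax.hyps have "typ_t (\<Gamma>(x \<mapsto> OmD)) M d \<Delta>" by (simp add: typ_t_typ_c.Ax)
    then show "\<exists>\<delta>. typ_t (\<Gamma>(x \<mapsto> \<delta>)) M d \<Delta> \<and> typ_t \<Gamma> L \<delta> \<Delta>"
      by (blast intro: typ_t_typ_c.Om_t)
  qed
next
  case (Abs \<Gamma> N k r \<Delta> y M)
  from Abs.hyps have "typ_t (\<Gamma>(y := None)) (subst_t M L x) (Arr (Prod (gam \<Gamma> y) k) r) \<Delta>"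
    unfolding Abs.prems(1)[symmetric] by (rule typ_t_typ_c.Abs)
  then show ?case
  proof (rule typ_substD_nonVar)
    assume "M \<noteq> Var x"
    with Abs.prems obtain M' where M: "M = Lam y M'" "N = subst_t M' L x" "y \<noteq> x"
      by (metis subst_t_eq_LamD)
    moreover have "x \<notin> bv_t M'" "bv_t M' \<inter> fv_t L = {}" "bn_t M' \<inter> fn_t L = {}"
      using Abs.prems M(1) by auto
    ultimately obtain \<delta> where
      "typ_t (\<Gamma>(x \<mapsto> \<delta>)) M' (Arr k r) \<Delta>" and L: "typ_t \<Gamma> L \<delta> \<Delta>"
      using Abs.IH by blast
    from typ_t_typ_c.Abs[OF this(1), of y]
    have "typ_t ((\<Gamma>(y := None))(x \<mapsto> \<delta>)) M (Arr (Prod (gam \<Gamma> y) k) r) \<Delta>"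
      using M by (simp add: gam_def fun_upd_twist)
    moreover have "typ_t (\<Gamma>(y := None)) L \<delta> \<Delta>"
      using Abs.prems(3) M(1) by (intro typ_env_cong(1)[OF L]) (auto simp: subset_iff)
    ultimately show "\<exists>\<delta>. typ_t ((\<Gamma>(y := None))(x \<mapsto> \<delta>)) M (Arr (Prod (gam \<Gamma> y) k) r) \<Delta>
        \<and> typ_t (\<Gamma>(y := None)) L \<delta> \<Delta>"
      by blast
  qed
next
  case (App \<Gamma> N1 d k r \<Delta> N2 M)
  from App.hyps have "typ_t \<Gamma> (subst_t M L x) (Arr k r) \<Delta>"
    unfolding App.prems(1)[symmetric] by (rule typ_t_typ_c.App)
  then show ?case
  proof (rule typ_substD_nonVar)
    assume "M \<noteq> Var x"
    with App.prems obtain M1 M2 where M: "M = App M1 M2" "N1 = subst_t M1 L x" "N2 = subst_t M2 L x"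
      by (metis subst_t_eq_AppD)
    have M1: "x \<notin> bv_t M1" "bv_t M1 \<inter> fv_t L = {}" "bn_t M1 \<inter> fn_t L = {}"
      and M2: "x \<notin> bv_t M2" "bv_t M2 \<inter> fv_t L = {}" "bn_t M2 \<inter> fn_t L = {}"
      using App.prems M(1) by auto
    obtain \<delta>1 where "typ_t (\<Gamma>(x \<mapsto> \<delta>1)) M1 (Arr (Prod d k) r) \<Delta>" "typ_t \<Gamma> L \<delta>1 \<Delta>"
      using App.IH(1)[OF M(2) M1] by blast
    moreover obtain \<delta>2 where "typ_t (\<Gamma>(x \<mapsto> \<delta>2)) M2 d \<Delta>" "typ_t \<Gamma> L \<delta>2 \<Delta>"
      using App.IH(2)[OF M(3) M2] by blast
    ultimately have "typ_t (\<Gamma>(x \<mapsto> AndD \<delta>1 \<delta>2)) M (Arr k r) \<Delta>" "typ_t \<Gamma> L (AndD \<delta>1 \<delta>2) \<Delta>"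
      unfolding M(1) by (auto intro: typ_t_typ_c.App typ_t_typ_c.And_t typ_basis_upd_AndD)
    then show "\<exists>\<delta>. typ_t (\<Gamma>(x \<mapsto> \<delta>)) M (Arr k r) \<Delta> \<and> typ_t \<Gamma> L \<delta> \<Delta>" by blast
  qed
next
  case (Cmd \<Gamma> N d \<Delta> g C)
  then obtain M where M: "C = Cmd g M" "N = subst_t M L x" by (metis subst_c_eq_CmdD)
  moreover have "x \<notin> bv_t M" "bv_t M \<inter> fv_t L = {}" "bn_t M \<inter> fn_t L = {}"
    using Cmd.prems M(1) by auto
  ultimately obtain \<delta> where "typ_t (\<Gamma>(x \<mapsto> \<delta>)) M d \<Delta>" "typ_t \<Gamma> L \<delta> \<Delta>"
    using Cmd.IH by blast
  then show ?case unfolding M(1) by (blast intro: typ_t_typ_c.Cmd)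
next
  case (Mu \<Gamma> C1 k' r \<Delta> g M)
  from Mu.hyps have "typ_t \<Gamma> (subst_t M L x) (Arr (dlt \<Delta> g) r) (\<Delta>(g := None))"
    unfolding Mu.prems(1)[symmetric] by (rule typ_t_typ_c.Mu)
  then show ?case
  proof (rule typ_substD_nonVar)
    assume "M \<noteq> Var x"
    with Mu.prems obtain C where M: "M = Mu g C" "C1 = subst_c C L x" by (metis subst_t_eq_MuD)
    moreover have "x \<notin> bv_c C" "bv_c C \<inter> fv_t L = {}" "bn_c C \<inter> fn_t L = {}"
      using Mu.prems M(1) by auto
    ultimately obtain \<delta> where
      "typ_c (\<Gamma>(x \<mapsto> \<delta>)) C (Prod (Arr k' r) k') \<Delta>" and L: "typ_t \<Gamma> L \<delta> \<Delta>"
      using Mu.IH by blast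
    from typ_t_typ_c.Mu[OF this(1), of g]
    have "typ_t (\<Gamma>(x \<mapsto> \<delta>)) M (Arr (dlt \<Delta> g) r) (\<Delta>(g := None))" using M(1) by simp
    moreover have "typ_t \<Gamma> L \<delta> (\<Delta>(g := None))"
      using Mu.prems(4) M(1) by (intro typ_env_cong(1)[OF L]) (auto simp: subset_iff)
    ultimately show "\<exists>\<delta>. typ_t (\<Gamma>(x \<mapsto> \<delta>)) M (Arr (dlt \<Delta> g) r) (\<Delta>(g := None))
        \<and> typ_t \<Gamma> L \<delta> (\<Delta>(g := None))"
      by blast
  qed
next
  case (And_t \<Gamma> N d1 \<Delta> d2 M)
  then obtain \<delta>1 \<delta>2 where
    "typ_t (\<Gamma>(x \<mapsto> \<delta>1)) M d1 \<Delta>" "typ_t \<Gamma> L \<delta>1 \<Delta>"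
    "typ_t (\<Gamma>(x \<mapsto> \<delta>2)) M d2 \<Delta>" "typ_t \<Gamma> L \<delta>2 \<Delta>"
    by metis
  then have "typ_t (\<Gamma>(x \<mapsto> AndD \<delta>1 \<delta>2)) M (AndD d1 d2) \<Delta>" "typ_t \<Gamma> L (AndD \<delta>1 \<delta>2) \<Delta>"
    by (auto intro: typ_t_typ_c.And_t typ_basis_upd_AndD)
  then show ?case by blast
next
  case (And_c \<Gamma> C' k1 \<Delta> k2 C)
  then obtain \<delta>1 \<delta>2 where
    "typ_c (\<Gamma>(x \<mapsto> \<delta>1)) C k1 \<Delta>" "typ_t \<Gamma> L \<delta>1 \<Delta>"
    "typ_c (\<Gamma>(x \<mapsto> \<delta>2)) C k2 \<Delta>" "typ_t \<Gamma> L \<delta>2 \<Delta>"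
    by metis
  then have "typ_c (\<Gamma>(x \<mapsto> AndD \<delta>1 \<delta>2)) C (AndC k1 k2) \<Delta>" "typ_t \<Gamma> L (AndD \<delta>1 \<delta>2) \<Delta>"
    by (auto intro: typ_t_typ_c.And_c typ_t_typ_c.And_t typ_basis_upd_AndD)
  then show ?case by blast
qed (blast intro: typ_t_typ_c.intros)+

lemma typ_t_subst_iff:
  assumes "x \<notin> dom \<Gamma>" "x \<notin> bv_t M"
    and "bv_t M \<inter> (fv_t L \<union> bv_t L) = {}" "bn_t M \<inter> (fn_t L \<union> bn_t L) = {}"
  shows "typ_t \<Gamma> (subst_t M L x) \<sigma> \<Delta> \<longleftrightarrow> (\<exists>\<delta>. typ_t (\<Gamma>(x \<mapsto> \<delta>)) M \<sigma> \<Delta> \<and> typ_t \<Gamma> L \<delta> \<Delta>)"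
proof
  assume "typ_t \<Gamma> (subst_t M L x) \<sigma> \<Delta>"
  moreover have "bv_t M \<inter> fv_t L = {}" "bn_t M \<inter> fn_t L = {}" using assms(3,4) by auto
  ultimately show "\<exists>\<delta>. typ_t (\<Gamma>(x \<mapsto> \<delta>)) M \<sigma> \<Delta> \<and> typ_t \<Gamma> L \<delta> \<Delta>"
    using typ_substD(1) assms(2) by blast
next
  assume "\<exists>\<delta>. typ_t (\<Gamma>(x \<mapsto> \<delta>)) M \<sigma> \<Delta> \<and> typ_t \<Gamma> L \<delta> \<Delta>"
  then obtain \<delta> where "typ_t (\<Gamma>(x \<mapsto> \<delta>)) M \<sigma> \<Delta>" "typ_t \<Gamma> L \<delta> \<Delta>" by blast
  with typ_substI(1)[OF this(1), of x \<delta> L] assms show "typ_t \<Gamma> (subst_t M L x) \<sigma> \<Delta>"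
    by simp
qed

lemma typ_c_subst_iff:
  assumes "x \<notin> dom \<Gamma>" "x \<notin> bv_c C"
    and "bv_c C \<inter> (fv_t L \<union> bv_t L) = {}" "bn_c C \<inter> (fn_t L \<union> bn_t L) = {}"
  shows "typ_c \<Gamma> (subst_c C L x) \<tau> \<Delta> \<longleftrightarrow> (\<exists>\<delta>. typ_c (\<Gamma>(x \<mapsto> \<delta>)) C \<tau> \<Delta> \<and> typ_t \<Gamma> L \<delta> \<Delta>)"
proof
  assume "typ_c \<Gamma> (subst_c C L x) \<tau> \<Delta>"
  moreover have "bv_c C \<inter> fv_t L = {}" "bn_c C \<inter> fn_t L = {}" using assms(3,4) by auto
  ultimately show "\<exists>\<delta>. typ_c (\<Gamma>(x \<mapsto> \<delta>)) C \<tau> \<Delta> \<and> typ_t \<Gamma> L \<delta> \<Delta>"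
    using typ_substD(2) assms(2) by blast
next
  assume "\<exists>\<delta>. typ_c (\<Gamma>(x \<mapsto> \<delta>)) C \<tau> \<Delta> \<and> typ_t \<Gamma> L \<delta> \<Delta>"
  then obtain \<delta> where "typ_c (\<Gamma>(x \<mapsto> \<delta>)) C \<tau> \<Delta>" "typ_t \<Gamma> L \<delta> \<Delta>" by blast
  with typ_substI(2)[OF this(1), of x \<delta> L] assms show "typ_c \<Gamma> (subst_c C L x) \<tau> \<Delta>"
    by simp
qed

theorem lemma5p2:
  assumes "omega_algebraic TYPE('r::complete_lattice)"
  shows
  "(\<forall>(\<Gamma>::'r basis) (\<Delta>::'r ctxt) a b M \<sigma>.
      finite (dom \<Gamma>) \<and> finite (dom \<Delta>) \<and> b \<notin> dom \<Delta> \<and>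
      bv_t M \<inter> dom \<Gamma> = {} \<and> bn_t M \<inter> (dom \<Delta> \<union> {a, b}) = {} \<longrightarrow>
      (typ_t \<Gamma> (ren_t M a b) \<sigma> \<Delta> \<longleftrightarrow>
         (\<exists>\<kappa>. typ_t \<Gamma> M \<sigma> (\<Delta>(b \<mapsto> \<kappa>)) \<and> le_C (dlt \<Delta> a) \<kappa>)))
 \<and> (\<forall>(\<Gamma>::'r basis) (\<Delta>::'r ctxt) a b C \<sigma>.
      finite (dom \<Gamma>) \<and> finite (dom \<Delta>) \<and> b \<notin> dom \<Delta> \<and>
      bv_c C \<inter> dom \<Gamma> = {} \<and> bn_c C \<inter> (dom \<Delta> \<union> {a, b}) = {} \<longrightarrow>
      (typ_c \<Gamma> (ren_c C a b) \<sigma> \<Delta> \<longleftrightarrow>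
         (\<exists>\<kappa>. typ_c \<Gamma> C \<sigma> (\<Delta>(b \<mapsto> \<kappa>)) \<and> le_C (dlt \<Delta> a) \<kappa>)))
 \<and> (\<forall>(\<Gamma>::'r basis) (\<Delta>::'r ctxt) x L M \<sigma>.
      finite (dom \<Gamma>) \<and> finite (dom \<Delta>) \<and> x \<notin> dom \<Gamma> \<and>
      bv_t M \<inter> (dom \<Gamma> \<union> {x} \<union> fv_t L \<union> bv_t L) = {} \<and>
      bn_t M \<inter> (dom \<Delta> \<union> fn_t L \<union> bn_t L) = {} \<and>
      bv_t L \<inter> dom \<Gamma> = {} \<and> bn_t L \<inter> dom \<Delta> = {} \<longrightarrow>
      (typ_t \<Gamma> (subst_t M L x) \<sigma> \<Delta> \<longleftrightarrow>
         (\<exists>\<delta>'. typ_t (\<Gamma>(x \<mapsto> \<delta>')) M \<sigma> \<Delta> \<and> typ_t \<Gamma> L \<delta>' \<Delta>)))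
 \<and> (\<forall>(\<Gamma>::'r basis) (\<Delta>::'r ctxt) x L C \<sigma>.
      finite (dom \<Gamma>) \<and> finite (dom \<Delta>) \<and> x \<notin> dom \<Gamma> \<and>
      bv_c C \<inter> (dom \<Gamma> \<union> {x} \<union> fv_t L \<union> bv_t L) = {} \<and>
      bn_c C \<inter> (dom \<Delta> \<union> fn_t L \<union> bn_t L) = {} \<and>
      bv_t L \<inter> dom \<Gamma> = {} \<and> bn_t L \<inter> dom \<Delta> = {} \<longrightarrow>
      (typ_c \<Gamma> (subst_c C L x) \<sigma> \<Delta> \<longleftrightarrow>
         (\<exists>\<delta>'. typ_c (\<Gamma>(x \<mapsto> \<delta>')) C \<sigma> \<Delta> \<and> typ_t \<Gamma> L \<delta>' \<Delta>)))"
  by (intro conjI allI impI typ_t_ren_iff typ_c_ren_iff typ_t_subst_iff typ_c_subst_iff; blast)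

end
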